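(* Let $d\ge 2$, $n\ge 36$, $0<\varepsilon\le\frac15$ and $0<\kappa\le\frac16\varepsilon^2$. Let $L_1,\dots,L_n\in\mathrm{GL}_d(\mathbb R)$ satisfy $\mathrm{gr}(L_i)\ge\kappa^{-1}$ for all $i\in[n]$ and $\rho(L_i,L_{i+1})\ge\varepsilon$ for all $i\in[n-1]$. Then $$e^{-11n\kappa/\varepsilon^2}\le\frac{\rho(L_1,L_2,\dots,L_n)}{\rho(L_1,L_2)\cdots\rho(L_{n-1},L_n)}\le e^{11n\kappa/\varepsilon^2}.$$
   Context: $\|\cdot\|$ is the operator norm. For $L\in\mathrm{GL}_d(\mathbb R)$ with singular values $s_1(L)\ge s_2(L)\ge\dots\ge s_d(L)>0$, the gap ratio is $\mathrm{gr}(L)=s_1(L)/s_2(L)$. For $L_1,\dots,L_m\in\mathrm{GL}_d(\mathbb R)$, $\rho(L_1,\dots,L_m)=\frac{\|L_m\cdots L_2L_1\|}{\|L_m\|\cdots\|L_1\|}$. *)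

theory Defs
  imports "HOL-Analysis.Analysis"
begin

definition opnorm :: "real^'d^'d \<Rightarrow> real" where
  "opnorm A = onorm (\<lambda>x. A *v x)"

definition is_singular_values :: "real^'d^'d \<Rightarrow> (nat \<Rightarrow> real) \<Rightarrow> bool" where
  "is_singular_values A s \<longleftrightarrow>
     (\<forall>k. 0 \<le> s k) \<and> (\<forall>j k. j \<le> k \<longrightarrow> s k \<le> s j) \<and> (\<forall>k\<ge>CARD('d). s k = 0) \<and>
     (\<exists>U V (e :: 'd \<Rightarrow> nat). orthogonal_matrix U \<and> orthogonal_matrix V \<and>
        bij_betw e UNIV {0..<CARD('d)} \<and>
        A = U ** (\<chi> i j. if i = j then s (e i) else 0) ** transpose V)"

text \<open>The k-th singular value s_k(A), 1-indexed as in the paper.\<close>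
definition singval :: "real^'d^'d \<Rightarrow> nat \<Rightarrow> real" where
  "singval A k = (THE s. is_singular_values A s) (k - 1)"

definition gap_ratio :: "real^'d^'d \<Rightarrow> real" where
  "gap_ratio A = singval A 1 / singval A 2"

text \<open>mprod L a b = L b ** ... ** L (a+1) ** L a (product of L a, ..., L b, later indices on the left).\<close>
fun mprod :: "(nat \<Rightarrow> real^'d^'d) \<Rightarrow> nat \<Rightarrow> nat \<Rightarrow> real^'d^'d" where
  "mprod L a 0 = (if a = 0 then L 0 else mat 1)"
| "mprod L a (Suc b) = (if a \<le> Suc b then (if a = Suc b then L a else L (Suc b) ** mprod L a b) else mat 1)"

definition rho :: "(nat \<Rightarrow> real^'d^'d) \<Rightarrow> nat \<Rightarrow> nat \<Rightarrow> real" where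
  "rho L a b = opnorm (mprod L a b) / (\<Prod>i=a..b. opnorm (L i))"

end

theory Submission
  imports Defs "HOL-Computational_Algebra.Polynomial" "HOL-Library.Multiset"
begin

text \<open>Normalise every factor to \<open>B\<^sub>i = L\<^sub>i / \<parallel>L\<^sub>i\<parallel>\<close>. A gap ratio of at least \<open>1/\<kappa>\<close> makes
  \<open>B\<^sub>i\<close> nearly of rank one: \<open>B\<^sub>i v\<^sub>i = u\<^sub>i\<close> for unit vectors \<open>u\<^sub>i, v\<^sub>i\<close>, and \<open>B\<^sub>i\<close> maps the
  orthogonal complement of \<open>v\<^sub>i\<close> into that of \<open>u\<^sub>i\<close> with norm at most \<open>\<kappa>\<close>. Hence
  \<open>\<rho>(L\<^sub>i, L\<^sub>i\<^sub>+\<^sub>1) = \<parallel>B\<^sub>i\<^sub>+\<^sub>1 B\<^sub>i\<parallel>\<close> equals \<open>a\<^sub>i = \<bar>v\<^sub>i\<^sub>+\<^sub>1 \<bullet> u\<^sub>i\<bar>\<close> up to \<open>O(\<kappa>)\<close>, so \<open>a\<^sub>i \<ge> 9\<epsilon>/10\<close>.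
  Along the product \<open>B\<^sub>k \<cdots> B\<^sub>1 y\<close> follow the coordinate along \<open>u\<^sub>k\<close> and the component
  orthogonal to \<open>u\<^sub>k\<close>: with \<open>q = 3\<kappa>/\<epsilon>\<close> the component stays below \<open>q\<close> times the coordinate,
  and each step multiplies the coordinate by \<open>a\<^sub>k \<plusminus> q\<close>. So \<open>\<rho>(L\<^sub>1, \<dots>, L\<^sub>n)\<close> lies between
  \<open>\<Prod>(a\<^sub>i - q)\<close> and \<open>(1 + q) \<Prod>(a\<^sub>i + q)\<close>, and each factor \<open>(a\<^sub>i \<plusminus> q) / \<rho>(L\<^sub>i, L\<^sub>i\<^sub>+\<^sub>1)\<close>
  is \<open>exp (O(\<kappa>/\<epsilon>\<^sup>2))\<close>.\<close>

section \<open>Singular values\<close>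

lemma linear_le_quadratic_imp_zero:
  fixes c K :: real
  assumes "\<And>t. t * c \<le> t\<^sup>2 * K"
  shows "c = 0"
proof (rule ccontr)
  assume "c \<noteq> 0"
  define t where "t = c / (\<bar>K\<bar> + 1)"
  have "0 < t * c"
    unfolding t_def using \<open>c \<noteq> 0\<close> by (simp add: power2_eq_square[symmetric])
  moreover have "K / (\<bar>K\<bar> + 1) < 1" using abs_ge_self[of K] by (simp add: divide_less_eq)
  ultimately have "t * c * (K / (\<bar>K\<bar> + 1)) < t * c"
    by (metis mult.right_neutral mult_strict_left_mono)
  also have "t * c * (K / (\<bar>K\<bar> + 1)) = t\<^sup>2 * K"
    unfolding t_def by (simp add: power2_eq_square)
  finally show False using assms[of t] by linarith
qed

lemma norm_add_scaleR_power2: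
  fixes a b :: "'a::real_inner"
  shows "(norm (a + t *\<^sub>R b))\<^sup>2 = (norm a)\<^sup>2 + 2 * t * (a \<bullet> b) + t\<^sup>2 * (norm b)\<^sup>2"
  unfolding power2_norm_eq_inner
  by (simp add: inner_commute algebra_simps power2_eq_square)

text \<open>The term linear in \<open>t\<close> of \<open>\<parallel>A (v + t x)\<parallel>\<^sup>2 \<le> s\<^sup>2 \<parallel>v + t x\<parallel>\<^sup>2\<close> must vanish.\<close>
lemma orthogonal_image_of_maximizer:
  fixes A :: "real^'d^'d"
  assumes max: "\<And>t. norm (A *v (v + t *\<^sub>R x)) \<le> s * norm (v + t *\<^sub>R x)"
    and "norm v = 1" "norm (A *v v) = s" "v \<bullet> x = 0"
  shows "(A *v v) \<bullet> (A *v x) = 0"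
proof (rule linear_le_quadratic_imp_zero)
  fix t
  have "(norm (A *v (v + t *\<^sub>R x)))\<^sup>2 \<le> (s * norm (v + t *\<^sub>R x))\<^sup>2"
    using max[of t] by (intro power_mono) auto
  then have "s\<^sup>2 + 2 * t * ((A *v v) \<bullet> (A *v x)) + t\<^sup>2 * (norm (A *v x))\<^sup>2
      \<le> s\<^sup>2 + t\<^sup>2 * (s\<^sup>2 * (norm x)\<^sup>2)"
    using assms(2-4)
    by (simp add: matrix_vector_right_distrib matrix_vector_mult_scaleR norm_add_scaleR_power2
        power_mult_distrib algebra_simps)
  moreover have "0 \<le> t\<^sup>2 * (norm (A *v x))\<^sup>2" by simp
  ultimately show "t * ((A *v v) \<bullet> (A *v x)) \<le> t\<^sup>2 * (s\<^sup>2 * (norm x)\<^sup>2 / 2)"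
    by linarith
qed

lemma exists_unit_orthogonal:
  fixes f :: "nat \<Rightarrow> real^'d"
  assumes "k < CARD('d)"
  shows "\<exists>x. norm x = 1 \<and> (\<forall>l<k. f l \<bullet> x = 0)"
proof -
  have "dim (f ` {..<k}) \<le> card (f ` {..<k})" by (rule dim_le_card') simp
  also have "\<dots> \<le> k" using card_image_le[of "{..<k}" f] by simp
  finally have "dim (f ` {..<k}) < DIM(real^'d)" using assms by simp
  then obtain x where "x \<noteq> 0" and x: "\<And>y. y \<in> span (f ` {..<k}) \<Longrightarrow> orthogonal x y"
    using orthogonal_to_subspace_exists[of "f ` {..<k}"] by blast
  have "f l \<bullet> (x /\<^sub>R norm x) = 0" if "l < k" for l
    using x[of "f l"] that by (simp add: span_base orthogonal_def inner_commute)
  with \<open>x \<noteq> 0\<close> show ?thesis by (intro exI[of _ "x /\<^sub>R norm x"]) simp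
qed

lemma exists_maximizer_orthogonal:
  fixes A :: "real^'d^'d" and v :: "nat \<Rightarrow> real^'d"
  assumes "k < CARD('d)"
  obtains w where "norm w = 1" "\<forall>l<k. v l \<bullet> w = 0"
    "\<And>x. \<forall>l<k. v l \<bullet> x = 0 \<Longrightarrow> norm (A *v x) \<le> norm (A *v w) * norm x"
proof -
  define S where "S = sphere 0 1 \<inter> (\<Inter>l<k. {x. v l \<bullet> x = 0})"
  have "compact S"
    unfolding S_def by (intro compact_Int_closed closed_INT ballI closed_hyperplane) auto
  moreover have "S \<noteq> {}" using exists_unit_orthogonal[OF assms, of v] unfolding S_def by auto
  moreover have "continuous_on S (\<lambda>x. norm (A *v x))"
    by (intro continuous_on_norm linear_continuous_on matrix_vector_mul_bounded_linear)
  ultimately obtain w where "w \<in> S" and w: "\<And>y. y \<in> S \<Longrightarrow> norm (A *v y) \<le> norm (A *v w)"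
    by (rule continuous_attains_sup[elim_format]) blast
  have "norm (A *v x) \<le> norm (A *v w) * norm x" if "\<forall>l<k. v l \<bullet> x = 0" for x
  proof (cases "x = 0")
    case False
    then have "x /\<^sub>R norm x \<in> S" using that unfolding S_def by auto
    then have "norm (A *v x) / norm x \<le> norm (A *v w)"
      using w[of "x /\<^sub>R norm x"] by (simp add: matrix_vector_mult_scaleR field_simps)
    with False show ?thesis by (simp add: divide_le_eq mult.commute)
  qed simp
  with \<open>w \<in> S\<close> show thesis using that unfolding S_def by auto
qed

text \<open>The first \<open>k\<close> steps of the variational construction of a singular value decomposition:
  \<open>v i\<close> maximises \<open>\<parallel>A x\<parallel>\<close> on the unit vectors orthogonal to \<open>v 0, \<dots>, v (i - 1)\<close>, with maximum
  \<open>\<sigma> i\<close> attained as \<open>A v i = \<sigma> i u i\<close>.\<close>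
definition greedy_svd ::
    "real^'d^'d \<Rightarrow> nat \<Rightarrow> (nat \<Rightarrow> real^'d) \<Rightarrow> (nat \<Rightarrow> real^'d) \<Rightarrow> (nat \<Rightarrow> real) \<Rightarrow> bool" where
  "greedy_svd A k v u \<sigma> \<longleftrightarrow>
     (\<forall>i<k. norm (v i) = 1 \<and> norm (u i) = 1 \<and> A *v v i = \<sigma> i *\<^sub>R u i \<and> 0 \<le> \<sigma> i) \<and>
     (\<forall>i<k. \<forall>j<k. i \<noteq> j \<longrightarrow> v i \<bullet> v j = 0 \<and> u i \<bullet> u j = 0) \<and>
     (\<forall>i j. i \<le> j \<longrightarrow> j < k \<longrightarrow> \<sigma> j \<le> \<sigma> i) \<and>
     (\<forall>j<k. \<forall>x. (\<forall>l<j. v l \<bullet> x = 0) \<longrightarrow> norm (A *v x) \<le> \<sigma> j * norm x) \<and>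
     (\<forall>j<k. \<forall>x. (\<forall>l\<le>j. v l \<bullet> x = 0) \<longrightarrow> u j \<bullet> (A *v x) = 0)"

lemma greedy_svdD:
  assumes "greedy_svd A k v u \<sigma>"
  shows "i < k \<Longrightarrow> norm (v i) = 1" "i < k \<Longrightarrow> norm (u i) = 1"
    "i < k \<Longrightarrow> A *v v i = \<sigma> i *\<^sub>R u i" "i < k \<Longrightarrow> 0 \<le> \<sigma> i"
    "i < k \<Longrightarrow> j < k \<Longrightarrow> i \<noteq> j \<Longrightarrow> v i \<bullet> v j = 0"
    "i < k \<Longrightarrow> j < k \<Longrightarrow> i \<noteq> j \<Longrightarrow> u i \<bullet> u j = 0"
    "i \<le> j \<Longrightarrow> j < k \<Longrightarrow> \<sigma> j \<le> \<sigma> i"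
    "j < k \<Longrightarrow> \<forall>l<j. v l \<bullet> x = 0 \<Longrightarrow> norm (A *v x) \<le> \<sigma> j * norm x"
    "j < k \<Longrightarrow> \<forall>l\<le>j. v l \<bullet> x = 0 \<Longrightarrow> u j \<bullet> (A *v x) = 0"
  using assms unfolding greedy_svd_def by blast+

lemma greedy_svdI:
  assumes "\<And>i. i < k \<Longrightarrow> norm (v i) = 1 \<and> norm (u i) = 1 \<and> A *v v i = \<sigma> i *\<^sub>R u i \<and> 0 \<le> \<sigma> i"
    and "\<And>i j. i < k \<Longrightarrow> j < k \<Longrightarrow> i \<noteq> j \<Longrightarrow> v i \<bullet> v j = 0 \<and> u i \<bullet> u j = 0"
    and "\<And>i j. i \<le> j \<Longrightarrow> j < k \<Longrightarrow> \<sigma> j \<le> \<sigma> i"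
    and "\<And>j x. j < k \<Longrightarrow> \<forall>l<j. v l \<bullet> x = 0 \<Longrightarrow> norm (A *v x) \<le> \<sigma> j * norm x"
    and "\<And>j x. j < k \<Longrightarrow> \<forall>l\<le>j. v l \<bullet> x = 0 \<Longrightarrow> u j \<bullet> (A *v x) = 0"
  shows "greedy_svd A k v u \<sigma>"
  unfolding greedy_svd_def using assms by (intro conjI allI impI) auto

lemma greedy_svd_fun_upd:
  assumes svd: "greedy_svd A k v u \<sigma>"
    and w: "norm w = 1" "\<forall>l<k. v l \<bullet> w = 0"
    and max: "\<And>x. \<forall>l<k. v l \<bullet> x = 0 \<Longrightarrow> norm (A *v x) \<le> s * norm x"
    and u': "norm u' = 1" "A *v w = s *\<^sub>R u'" "\<forall>l<k. u l \<bullet> u' = 0"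
      "\<And>x. \<forall>l<k. v l \<bullet> x = 0 \<Longrightarrow> w \<bullet> x = 0 \<Longrightarrow> u' \<bullet> (A *v x) = 0"
    and "0 \<le> s"
  shows "greedy_svd A (Suc k) (v(k := w)) (u(k := u')) (\<sigma>(k := s))"
proof (rule greedy_svdI)
  have s_le: "s \<le> \<sigma> i" if "i < k" for i
    using greedy_svdD(8)[OF svd that, of w] that w u'(1,2) \<open>0 \<le> s\<close> by simp
  show "norm ((v(k := w)) i) = 1 \<and> norm ((u(k := u')) i) = 1
      \<and> A *v (v(k := w)) i = (\<sigma>(k := s)) i *\<^sub>R (u(k := u')) i \<and> 0 \<le> (\<sigma>(k := s)) i"
    if "i < Suc k" for i
    using that greedy_svdD(1-4)[OF svd, of i] w u' \<open>0 \<le> s\<close> by (cases "i = k") auto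
  show "(v(k := w)) i \<bullet> (v(k := w)) j = 0 \<and> (u(k := u')) i \<bullet> (u(k := u')) j = 0"
    if "i < Suc k" "j < Suc k" "i \<noteq> j" for i j
    using that greedy_svdD(5,6)[OF svd, of i j] w(2) u'(3) by (auto simp: less_Suc_eq inner_commute)
  show "(\<sigma>(k := s)) j \<le> (\<sigma>(k := s)) i" if "i \<le> j" "j < Suc k" for i j
    using that greedy_svdD(7)[OF svd, of i j] s_le by (auto simp: less_Suc_eq)
  show "norm (A *v x) \<le> (\<sigma>(k := s)) j * norm x"
    if "j < Suc k" "\<forall>l<j. (v(k := w)) l \<bullet> x = 0" for j x
    using that greedy_svdD(8)[OF svd, of j x] max[of x] by (auto simp: less_Suc_eq)
  show "(u(k := u')) j \<bullet> (A *v x) = 0" if "j < Suc k" "\<forall>l\<le>j. (v(k := w)) l \<bullet> x = 0" for j x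
  proof (cases "j = k")
    case True
    have "\<forall>l<k. v l \<bullet> x = 0"
    proof (intro allI impI)
      fix l assume "l < k"
      then show "v l \<bullet> x = 0" using that(2) True by (metis fun_upd_other less_imp_le less_irrefl)
    qed
    moreover have "w \<bullet> x = 0" using that(2) True by auto
    ultimately show ?thesis using True u'(4) by simp
  next
    case False
    then show ?thesis using that greedy_svdD(9)[OF svd, of j x] by auto
  qed
qed

lemma greedy_svd_Suc:
  fixes A :: "real^'d^'d"
  assumes svd: "greedy_svd A k v u \<sigma>" and k: "k < CARD('d)"
  shows "\<exists>v' u' \<sigma>'. greedy_svd A (Suc k) v' u' \<sigma>'"
proof -
  obtain w where w: "norm w = 1" "\<forall>l<k. v l \<bullet> w = 0"
    and max: "\<And>x. \<forall>l<k. v l \<bullet> x = 0 \<Longrightarrow> norm (A *v x) \<le> norm (A *v w) * norm x"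
    using exists_maximizer_orthogonal[OF k] by blast
  define s where "s = norm (A *v w)"
  have orth: "(A *v w) \<bullet> (A *v x) = 0" if "\<forall>l<k. v l \<bullet> x = 0" "w \<bullet> x = 0" for x
  proof (rule orthogonal_image_of_maximizer[OF _ w(1) refl that(2)])
    show "norm (A *v (w + t *\<^sub>R x)) \<le> norm (A *v w) * norm (w + t *\<^sub>R x)" for t
      using that(1) w(2) by (intro max) (simp add: inner_add_right)
  qed
  obtain u' where u': "norm u' = 1" "A *v w = s *\<^sub>R u'" "\<forall>l<k. u l \<bullet> u' = 0"
    "\<And>x. \<forall>l<k. v l \<bullet> x = 0 \<Longrightarrow> w \<bullet> x = 0 \<Longrightarrow> u' \<bullet> (A *v x) = 0"
  proof (cases "s = 0")
    case True
    obtain u' where u': "norm u' = 1" "\<forall>l<k. u l \<bullet> u' = 0"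
      using exists_unit_orthogonal[OF k] by blast
    show thesis
    proof (rule that[OF u'(1) _ u'(2)])
      show "A *v w = s *\<^sub>R u'" using True unfolding s_def by simp
      show "u' \<bullet> (A *v x) = 0" if "\<forall>l<k. v l \<bullet> x = 0" for x
        using max[OF that] True unfolding s_def by simp
    qed
  next
    case False
    show thesis
    proof (rule that[of "(1 / s) *\<^sub>R (A *v w)"])
      show "\<forall>l<k. u l \<bullet> (1 / s) *\<^sub>R (A *v w) = 0"
        using greedy_svdD(9)[OF svd] w(2) by simp
      show "norm ((1 / s) *\<^sub>R (A *v w)) = 1" using False unfolding s_def by simp
      show "A *v w = s *\<^sub>R (1 / s) *\<^sub>R (A *v w)" using False by simp
      show "(1 / s) *\<^sub>R (A *v w) \<bullet> (A *v x) = 0" if "\<forall>l<k. v l \<bullet> x = 0" "w \<bullet> x = 0" for x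
        using orth[OF that] by simp
    qed
  qed
  have "0 \<le> s" unfolding s_def by simp
  from greedy_svd_fun_upd[OF svd w max[folded s_def] u' this] show ?thesis by blast
qed

lemma greedy_svd_exists:
  fixes A :: "real^'d^'d"
  shows "k \<le> CARD('d) \<Longrightarrow> \<exists>v u \<sigma>. greedy_svd A k v u \<sigma>"
proof (induction k)
  case 0
  show ?case unfolding greedy_svd_def by auto
next
  case (Suc k)
  then show ?case using greedy_svd_Suc[of A k] by auto
qed

lemma orthogonal_matrix_of_orthonormal_columns:
  fixes f :: "nat \<Rightarrow> real^'d" and e :: "'d \<Rightarrow> nat"
  assumes e: "bij_betw e UNIV {0..<CARD('d)}"
    and unit: "\<And>i. i < CARD('d) \<Longrightarrow> norm (f i) = 1"
    and orth: "\<And>i j. i < CARD('d) \<Longrightarrow> j < CARD('d) \<Longrightarrow> i \<noteq> j \<Longrightarrow> f i \<bullet> f j = 0"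
  shows "orthogonal_matrix (\<chi> r c. f (e c) $ r)"
proof -
  have "e c < CARD('d)" for c using e by (auto simp: bij_betw_def)
  moreover have "e c \<noteq> e c'" if "c \<noteq> c'" for c c'
    using e that by (auto simp: bij_betw_def inj_on_def)
  moreover have "column c (\<chi> r c. f (e c) $ r) = f (e c)" for c
    by (simp add: column_def vec_eq_iff)
  ultimately show ?thesis
    unfolding orthogonal_matrix_orthonormal_columns orthogonal_def using unit orth by simp
qed

lemma greedy_svd_is_singular_values:
  fixes A :: "real^'d^'d"
  assumes svd: "greedy_svd A CARD('d) v u \<sigma>"
  shows "is_singular_values A (\<lambda>k. if k < CARD('d) then \<sigma> k else 0)"
proof -
  define s where "s = (\<lambda>k. if k < CARD('d) then \<sigma> k else 0)"
  obtain e :: "'d \<Rightarrow> nat" where e: "bij_betw e UNIV {0..<CARD('d)}"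
    using ex_bij_betw_finite_nat[of "UNIV :: 'd set"] by auto
  then have e_less: "e c < CARD('d)" for c by (auto simp: bij_betw_def)
  define U :: "real^'d^'d" where "U = (\<chi> r c. u (e c) $ r)"
  define V :: "real^'d^'d" where "V = (\<chi> r c. v (e c) $ r)"
  define D :: "real^'d^'d" where "D = (\<chi> i j. if i = j then s (e i) else 0)"
  have U: "orthogonal_matrix U" and V: "orthogonal_matrix V"
    unfolding U_def V_def using greedy_svdD(1,2,5,6)[OF svd]
    by (auto intro!: orthogonal_matrix_of_orthonormal_columns[OF e])
  have "(A ** V) $ r $ c = (U ** D) $ r $ c" for r c
  proof -
    have "(A ** V) $ r $ c = (A *v v (e c)) $ r"
      unfolding matrix_matrix_mult_def matrix_vector_mult_def V_def by simp
    also have "\<dots> = \<sigma> (e c) * u (e c) $ r" using greedy_svdD(3)[OF svd e_less] by simp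
    also have "\<dots> = (U ** D) $ r $ c"
      unfolding matrix_matrix_mult_def U_def D_def s_def using e_less
      by (simp add: if_distrib[of "\<lambda>x. _ * x"] sum.delta' cong: if_cong)
    finally show ?thesis .
  qed
  then have "A ** V = U ** D" by (simp add: vec_eq_iff)
  then have "A = U ** D ** transpose V"
    using V by (metis matrix_mul_assoc matrix_mul_rid orthogonal_matrix_def)
  moreover have "0 \<le> s k" for k using greedy_svdD(4)[OF svd] by (simp add: s_def)
  moreover have "s k \<le> s j" if "j \<le> k" for j k
    using that greedy_svdD(4,7)[OF svd] by (simp add: s_def)
  moreover have "\<forall>k\<ge>CARD('d). s k = 0" by (simp add: s_def)
  ultimately show ?thesis
    unfolding is_singular_values_def s_def[symmetric] using U V e unfolding D_def by blast
qed

lemma matrix_mul_diff_distrib_left: "(A::real^'n^'m) ** (B - C) = A ** B - A ** C"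
  by (vector matrix_matrix_mult_def sum_subtractf[symmetric] field_simps)

lemma matrix_mul_diff_distrib_right: "((B::real^'n^'m) - C) ** A = B ** A - C ** A"
  by (vector matrix_matrix_mult_def sum_subtractf[symmetric] field_simps)

lemma det_mat_minus_transpose_mult_self:
  fixes A :: "real^'d^'d"
  assumes "is_singular_values A s"
  shows "det (mat x - transpose A ** A) = (\<Prod>k<CARD('d). x - (s k)\<^sup>2)"
proof -
  obtain U V and e :: "'d \<Rightarrow> nat" where U: "orthogonal_matrix U" and V: "orthogonal_matrix V"
    and e: "bij_betw e UNIV {0..<CARD('d)}"
    and A: "A = U ** (\<chi> i j. if i = j then s (e i) else 0) ** transpose V"
    using assms unfolding is_singular_values_def by blast
  define D :: "real^'d^'d" where "D = (\<chi> i j. if i = j then s (e i) else 0)"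
  have "transpose D = D" unfolding D_def transpose_def by (simp add: vec_eq_iff)
  then have "transpose A = V ** D ** transpose U"
    unfolding A D_def[symmetric] by (simp add: matrix_transpose_mul matrix_mul_assoc)
  then have "transpose A ** A = V ** D ** (transpose U ** U) ** D ** transpose V"
    unfolding A D_def[symmetric] by (simp add: matrix_mul_assoc)
  then have AtA: "transpose A ** A = V ** (D ** D) ** transpose V"
    using U unfolding orthogonal_matrix_def by (simp add: matrix_mul_assoc)
  have mat_x: "mat x = V ** mat x ** transpose V"
  proof -
    have "mat x = x *\<^sub>R (mat 1 :: real^'d^'d)" by (simp add: vec_eq_iff mat_def)
    moreover have "V ** (x *\<^sub>R mat 1) ** transpose V = x *\<^sub>R (V ** transpose V)"
      by (simp add: matrix_scalar_ac scalar_matrix_assoc)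
    ultimately show ?thesis using V unfolding orthogonal_matrix_def by simp
  qed
  have "mat x - transpose A ** A = V ** (mat x - D ** D) ** transpose V"
    unfolding matrix_mul_diff_distrib_left matrix_mul_diff_distrib_right
    using AtA mat_x by metis
  then have "det (mat x - transpose A ** A) = det V * det (mat x - D ** D) * det V"
    by (simp add: det_mul det_transpose)
  also have "\<dots> = det (mat x - D ** D)"
    using det_orthogonal_matrix[OF V] by auto
  also have "\<dots> = (\<Prod>i\<in>UNIV. x - (s (e i))\<^sup>2)"
    by (subst det_diagonal)
      (auto simp: D_def mat_def matrix_matrix_mult_def power2_eq_square
        if_distrib[of "\<lambda>y. y * _"] sum.delta' cong: if_cong)
  also have "\<dots> = (\<Prod>k<CARD('d). x - (s k)\<^sup>2)"
    using prod.reindex_bij_betw[OF e, of "\<lambda>k. x - (s k)\<^sup>2"] by (simp add: atLeast0LessThan)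
  finally show ?thesis .
qed

lemma order_linear_factor: "order c [:-a, 1:] = (if c = a then 1 else (0::nat))"
  using order_power_n_n[of a 1] by (auto intro: order_0I)

lemma order_prod_linear_factors:
  fixes a :: "nat \<Rightarrow> 'a::idom"
  shows "order c (\<Prod>k<n. [:-a k, 1:]) = count (mset (map a [0..<n])) c"
proof (induction n)
  case (Suc n)
  have "(\<Prod>k<Suc n. [:-a k, 1:]) \<noteq> 0" by (subst prod_zero_iff) auto
  then have "order c (\<Prod>k<Suc n. [:-a k, 1:]) = order c (\<Prod>k<n. [:-a k, 1:]) + order c [:-a n, 1:]"
    unfolding prod.lessThan_Suc by (rule order_mult)
  with Suc.IH show ?case by (simp add: order_linear_factor)
qed simp

lemma mset_eq_if_prod_linear_factors_eq:
  fixes a b :: "nat \<Rightarrow> real"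
  assumes "\<And>x. (\<Prod>k<n. x - a k) = (\<Prod>k<n. x - b k)"
  shows "mset (map a [0..<n]) = mset (map b [0..<n])"
proof -
  have "poly (\<Prod>k<n. [:-a k, 1:]) = poly (\<Prod>k<n. [:-b k, 1:])"
    using assms by (simp add: fun_eq_iff poly_prod)
  then have "(\<Prod>k<n. [:-a k, 1:]) = (\<Prod>k<n. [:-b k, 1:])" by (simp add: poly_eq_poly_eq_iff)
  then show ?thesis by (metis multiset_eqI order_prod_linear_factors)
qed

lemma antimono_eq_if_mset_eq:
  fixes s t :: "nat \<Rightarrow> real"
  assumes "mset (map s [0..<n]) = mset (map t [0..<n])"
    and "\<And>j k. j \<le> k \<Longrightarrow> s k \<le> s j" and "\<And>j k. j \<le> k \<Longrightarrow> t k \<le> t j"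
    and "k < n"
  shows "s k = t k"
proof -
  have "mset (map (\<lambda>k. - t k) [0..<n]) = mset (map (\<lambda>k. - s k) [0..<n])"
    using arg_cong[OF assms(1), of "image_mset uminus"]
    by (simp add: image_mset.compositionality comp_def)
  moreover have "sorted (map (\<lambda>k. - s k) [0..<n])" "sorted (map (\<lambda>k. - t k) [0..<n])"
    using assms(2,3) by (simp_all add: sorted_iff_nth_mono)
  ultimately have "map (\<lambda>k. - s k) [0..<n] = map (\<lambda>k. - t k) [0..<n]"
    by (metis properties_for_sort sorted_sort_id)
  then show ?thesis using \<open>k < n\<close> by (metis add_0 diff_zero minus_equation_iff nth_map_upt)
qed

lemma image_mset_sqrt_square:
  fixes f :: "nat \<Rightarrow> real"
  shows "(\<And>k. 0 \<le> f k) \<Longrightarrow> image_mset sqrt (mset (map (\<lambda>k. (f k)\<^sup>2) xs)) = mset (map f xs)"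
  by (induction xs) auto

text \<open>Singular values are determined by \<open>A\<close>: their squares are the roots of the
  characteristic polynomial of \<open>A\<^sup>T A\<close>.\<close>
lemma is_singular_values_unique:
  fixes A :: "real^'d^'d"
  assumes s: "is_singular_values A s" and t: "is_singular_values A t"
  shows "s = t"
proof
  fix k
  have nonneg: "0 \<le> s k" "0 \<le> t k" for k using s t unfolding is_singular_values_def by auto
  have "mset (map (\<lambda>k. (s k)\<^sup>2) [0..<CARD('d)]) = mset (map (\<lambda>k. (t k)\<^sup>2) [0..<CARD('d)])"
  proof (rule mset_eq_if_prod_linear_factors_eq)
    fix x
    show "(\<Prod>k<CARD('d). x - (s k)\<^sup>2) = (\<Prod>k<CARD('d). x - (t k)\<^sup>2)"
      using det_mat_minus_transpose_mult_self[OF s, of x] det_mat_minus_transpose_mult_self[OF t, of x]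
      by simp
  qed
  then have eq: "mset (map s [0..<CARD('d)]) = mset (map t [0..<CARD('d)])"
    using image_mset_sqrt_square[of s] image_mset_sqrt_square[of t] nonneg by metis
  show "s k = t k"
  proof (cases "k < CARD('d)")
    case True
    have "\<And>j k. j \<le> k \<Longrightarrow> s k \<le> s j" "\<And>j k. j \<le> k \<Longrightarrow> t k \<le> t j"
      using s t unfolding is_singular_values_def by blast+
    then show ?thesis by (rule antimono_eq_if_mset_eq[OF eq _ _ True])
  next
    case False
    then show ?thesis using s t unfolding is_singular_values_def by simp
  qed
qed

lemma singval_eq:
  fixes A :: "real^'d^'d"
  assumes "is_singular_values A s"
  shows "singval A k = s (k - 1)"
proof -
  have "(THE s. is_singular_values A s) = s"
  proof (rule the_equality)
    show "is_singular_values A s" by (fact assms)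
  qed (use assms is_singular_values_unique in blast)
  then show ?thesis unfolding singval_def by simp
qed

lemma top_singular_pair:
  fixes A :: "real^'d^'d"
  assumes "2 \<le> CARD('d)"
  obtains u v where "norm u = 1" "norm v = 1" "A *v v = singval A 1 *\<^sub>R u"
    "0 \<le> singval A 2" "singval A 2 \<le> singval A 1"
    "\<And>x. v \<bullet> x = 0 \<Longrightarrow> norm (A *v x) \<le> singval A 2 * norm x \<and> u \<bullet> (A *v x) = 0"
proof -
  obtain v u \<sigma> where svd: "greedy_svd A CARD('d) v u \<sigma>"
    using greedy_svd_exists[of "CARD('d)" A] by auto
  have "singval A 1 = \<sigma> 0" "singval A 2 = \<sigma> 1"
    using singval_eq[OF greedy_svd_is_singular_values[OF svd]] assms by simp_all
  moreover have "\<forall>l<1. v l \<bullet> x = 0" if "v 0 \<bullet> x = 0" for x using that by simp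
  moreover have "\<forall>l\<le>0. v l \<bullet> x = 0" if "v 0 \<bullet> x = 0" for x using that by simp
  ultimately show thesis
    using that[of "u 0" "v 0"] greedy_svdD[OF svd] assms by fastforce
qed

section \<open>Near rank one matrices\<close>

text \<open>This is the shape of
  \<open>A / s\<^sub>1(A)\<close> when \<open>gr(A) \<ge> 1/\<kappa>\<close>.\<close>
definition near_rank_one :: "real^'d^'d \<Rightarrow> real^'d \<Rightarrow> real^'d \<Rightarrow> real \<Rightarrow> bool" where
  "near_rank_one B u v \<kappa> \<longleftrightarrow> norm u = 1 \<and> norm v = 1 \<and> B *v v = u \<and>
     (\<forall>x. v \<bullet> x = 0 \<longrightarrow> norm (B *v x) \<le> \<kappa> * norm x \<and> u \<bullet> (B *v x) = 0)"

lemma near_rank_one_split: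
  fixes y :: "real^'d"
  assumes "near_rank_one B u v \<kappa>"
  defines "z \<equiv> y - (v \<bullet> y) *\<^sub>R v"
  shows "B *v y = (v \<bullet> y) *\<^sub>R u + B *v z" "norm (B *v z) \<le> \<kappa> * norm z" "u \<bullet> (B *v z) = 0"
    "(norm z)\<^sup>2 = (norm y)\<^sup>2 - (v \<bullet> y)\<^sup>2"
proof -
  have "v \<bullet> v = 1" using assms(1) unfolding near_rank_one_def by (simp add: norm_eq_1)
  then have "v \<bullet> z = 0" unfolding z_def by (simp add: inner_diff_right)
  then show "norm (B *v z) \<le> \<kappa> * norm z" "u \<bullet> (B *v z) = 0"
    using assms(1) unfolding near_rank_one_def by auto
  show "B *v y = (v \<bullet> y) *\<^sub>R u + B *v z"
    using assms(1) unfolding z_def near_rank_one_def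
    by (simp add: matrix_vector_mult_diff_distrib matrix_vector_mult_scaleR)
  show "(norm z)\<^sup>2 = (norm y)\<^sup>2 - (v \<bullet> y)\<^sup>2"
    unfolding z_def power2_norm_eq_inner using \<open>v \<bullet> v = 1\<close>
    by (simp add: inner_diff_left inner_diff_right inner_commute power2_eq_square)
qed

lemma near_rank_one_inner:
  assumes "near_rank_one B u v \<kappa>"
  shows "u \<bullet> (B *v y) = v \<bullet> y"
proof -
  have "u \<bullet> u = 1" using assms unfolding near_rank_one_def by (simp add: norm_eq_1)
  then show ?thesis using near_rank_one_split[OF assms, of y] by (simp add: inner_add_right)
qed

lemma near_rank_one_remainder:
  assumes "near_rank_one B u v \<kappa>" "0 \<le> \<kappa>"
  shows "norm (B *v y - (v \<bullet> y) *\<^sub>R u) \<le> \<kappa> * norm y"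
proof -
  define z where "z = y - (v \<bullet> y) *\<^sub>R v"
  have "(norm z)\<^sup>2 \<le> (norm y)\<^sup>2" using near_rank_one_split(4)[OF assms(1), of y] z_def by simp
  then have "norm z \<le> norm y" by (rule power2_le_imp_le) simp
  then show ?thesis
    using near_rank_one_split(1,2)[OF assms(1), of y] assms(2) z_def
    by (smt (verit) add_diff_cancel_left' mult_left_mono)
qed

lemma near_rank_one_norm_le:
  assumes "near_rank_one B u v \<kappa>" "0 \<le> \<kappa>" "\<kappa> \<le> 1"
  shows "norm (B *v y) \<le> norm y"
proof -
  define z where "z = y - (v \<bullet> y) *\<^sub>R v"
  note split = near_rank_one_split[OF assms(1), of y, folded z_def]
  have "u \<bullet> u = 1" using assms(1) unfolding near_rank_one_def by (simp add: norm_eq_1)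
  have "norm (B *v z) \<le> norm z"
    using split(2) assms(2,3) by (meson mult_left_le_one_le norm_ge_zero order_trans)
  then have "(norm (B *v z))\<^sup>2 \<le> (norm z)\<^sup>2" by (simp add: power_mono)
  moreover have "(norm (B *v y))\<^sup>2 = (v \<bullet> y)\<^sup>2 + (norm (B *v z))\<^sup>2"
    unfolding split(1) power2_norm_eq_inner using split(3) \<open>u \<bullet> u = 1\<close>
    by (simp add: inner_add_left inner_add_right inner_commute power2_eq_square)
  ultimately have "(norm (B *v y))\<^sup>2 \<le> (norm y)\<^sup>2" using split(4) by simp
  then show ?thesis by (rule power2_le_imp_le) simp
qed

lemma norm_le_opnorm: "norm (M *v x) \<le> opnorm M * norm x"
  unfolding opnorm_def by (rule onorm[OF matrix_vector_mul_bounded_linear])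

lemma opnorm_le: "(\<And>x. norm (M *v x) \<le> b * norm x) \<Longrightarrow> opnorm (M::real^'d^'d) \<le> b"
  unfolding opnorm_def by (rule onorm_le)

lemma opnorm_scaleR: "opnorm (c *\<^sub>R M) = \<bar>c\<bar> * opnorm (M::real^'d^'d)"
  unfolding opnorm_def scaleR_matrix_vector_assoc[symmetric]
  by (rule onorm_scaleR[OF matrix_vector_mul_bounded_linear])

lemma gap_ratio_near_rank_one:
  fixes A :: "real^'d^'d"
  assumes "2 \<le> CARD('d)" "0 < \<kappa>" "\<kappa> \<le> 1" "1 / \<kappa> \<le> gap_ratio A"
  obtains u v where "0 < opnorm A" "near_rank_one ((1 / opnorm A) *\<^sub>R A) u v \<kappa>"
proof -
  obtain u v where uv: "norm u = 1" "norm v = 1" "A *v v = singval A 1 *\<^sub>R u"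
    "0 \<le> singval A 2" "singval A 2 \<le> singval A 1"
    and perp: "\<And>x. v \<bullet> x = 0 \<Longrightarrow> norm (A *v x) \<le> singval A 2 * norm x \<and> u \<bullet> (A *v x) = 0"
    using top_singular_pair[OF assms(1)] by blast
  define N where "N = singval A 1"
  have "singval A 2 \<noteq> 0" using assms(2,4) unfolding gap_ratio_def by auto
  then have N0: "0 < N" and s2: "singval A 2 \<le> \<kappa> * N"
    using uv(4,5) assms(2,4) unfolding N_def gap_ratio_def by (auto simp: field_simps)
  define B where "B = (1 / N) *\<^sub>R A"
  have Bx: "B *v x = (1 / N) *\<^sub>R (A *v x)" for x
    unfolding B_def by (simp add: scaleR_matrix_vector_assoc)
  have "near_rank_one B u v \<kappa>"
    unfolding near_rank_one_def
  proof (intro conjI allI impI)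
    show "B *v v = u" unfolding Bx using uv(3) N0 unfolding N_def by simp
    fix x assume "v \<bullet> x = 0"
    then have "norm (A *v x) \<le> \<kappa> * N * norm x" "u \<bullet> (A *v x) = 0"
      using perp[of x] mult_right_mono[OF s2 norm_ge_zero[of x]] by auto
    then show "norm (B *v x) \<le> \<kappa> * norm x" "u \<bullet> (B *v x) = 0"
      unfolding Bx using N0 by (auto simp: field_simps)
  qed (use uv in auto)
  moreover have "opnorm A = N"
  proof (rule antisym)
    show "opnorm A \<le> N"
    proof (rule opnorm_le)
      fix x
      have "norm (B *v x) \<le> norm x"
        using near_rank_one_norm_le[OF \<open>near_rank_one B u v \<kappa>\<close>] assms(2,3) by simp
      then show "norm (A *v x) \<le> N * norm x" unfolding Bx using N0 by (simp add: field_simps)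
    qed
    show "N \<le> opnorm A" using norm_le_opnorm[of A v] uv N0 unfolding N_def by simp
  qed
  ultimately show thesis using that N0 unfolding B_def by simp
qed

section \<open>Products\<close>

lemma mprod_scaleR: "mprod (\<lambda>i. c i *\<^sub>R L i) a b = (\<Prod>i\<in>{a..b}. c i) *\<^sub>R mprod L a b"
proof (induction b)
  case (Suc b)
  show ?case
  proof (cases "a \<le> b")
    case True
    then have "{a..Suc b} = insert (Suc b) {a..b}" by auto
    with True Suc.IH show ?thesis by (simp add: matrix_scalar_ac scalar_matrix_assoc mult.commute)
  qed (auto simp: not_le le_Suc_eq)
qed simp

lemma mprod_one_Suc: "mprod L 1 (Suc k) = L (Suc k) ** mprod L 1 k"
  by (cases k) auto

lemma mprod_Suc_self: "mprod L i (Suc i) = L (Suc i) ** L i"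
  by (cases i) auto

text \<open>Normalising every factor to operator norm one turns \<open>\<rho>\<close> into an operator norm; factors
  of norm zero are harmless because \<open>1 / 0 = 0\<close> makes both sides vanish.\<close>
lemma rho_eq_opnorm_normalized:
  "rho L a b = opnorm (mprod (\<lambda>i. (1 / opnorm (L i)) *\<^sub>R L i) a b)"
proof -
  have "(\<Prod>i\<in>{a..b}. 1 / opnorm (L i)) = 1 / (\<Prod>i=a..b. opnorm (L i))"
    by (simp add: prod_dividef)
  moreover have "0 \<le> (\<Prod>i=a..b. opnorm (L i))"
    unfolding opnorm_def by (intro prod_nonneg onorm_pos_le matrix_vector_mul_bounded_linear)
  ultimately show ?thesis
    unfolding rho_def mprod_scaleR opnorm_scaleR by simp
qed

lemma near_rank_one_pair_opnorm:
  assumes B: "near_rank_one B u v \<kappa>" and B': "near_rank_one B' u' v' \<kappa>"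
    and "0 \<le> \<kappa>" "\<kappa> \<le> 1"
  shows "\<bar>v' \<bullet> u\<bar> - \<kappa> \<le> opnorm (B' ** B)" "opnorm (B' ** B) \<le> \<bar>v' \<bullet> u\<bar> + 2 * \<kappa>"
proof -
  have unit: "norm u = 1" "norm v = 1" "norm u' = 1" "norm v' = 1" "B *v v = u"
    using B B' unfolding near_rank_one_def by auto
  have "\<bar>v' \<bullet> u\<bar> \<le> norm (B' *v u) + \<kappa>"
    using norm_triangle_ineq2[of "(v' \<bullet> u) *\<^sub>R u'" "B' *v u"]
      near_rank_one_remainder[OF B' \<open>0 \<le> \<kappa>\<close>, of u] unit
    by (simp add: norm_minus_commute)
  also have "norm (B' *v u) = norm ((B' ** B) *v v)"
    using unit by (simp add: matrix_vector_mul_assoc[symmetric])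
  also have "\<dots> \<le> opnorm (B' ** B)" using norm_le_opnorm[of "B' ** B" v] unit by simp
  finally show "\<bar>v' \<bullet> u\<bar> - \<kappa> \<le> opnorm (B' ** B)" by simp
  show "opnorm (B' ** B) \<le> \<bar>v' \<bullet> u\<bar> + 2 * \<kappa>"
  proof (rule opnorm_le)
    fix x
    define y where "y = B *v x"
    have ny: "norm y \<le> norm x" unfolding y_def using near_rank_one_norm_le[OF B] assms(3,4) .
    have "v' \<bullet> y = (v \<bullet> x) * (v' \<bullet> u) + v' \<bullet> (y - (v \<bullet> x) *\<^sub>R u)"
      by (simp add: inner_diff_right)
    moreover have "\<bar>v' \<bullet> (y - (v \<bullet> x) *\<^sub>R u)\<bar> \<le> \<kappa> * norm x"
      using Cauchy_Schwarz_ineq2[of v' "y - (v \<bullet> x) *\<^sub>R u"] unit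
        near_rank_one_remainder[OF B \<open>0 \<le> \<kappa>\<close>, of x]
      unfolding y_def by simp
    moreover have "\<bar>(v \<bullet> x) * (v' \<bullet> u)\<bar> \<le> norm x * \<bar>v' \<bullet> u\<bar>"
      using Cauchy_Schwarz_ineq2[of v x] unit by (simp add: abs_mult mult_right_mono)
    ultimately have "\<bar>v' \<bullet> y\<bar> \<le> norm x * \<bar>v' \<bullet> u\<bar> + \<kappa> * norm x" by linarith
    moreover have "norm (B' *v y) \<le> \<bar>v' \<bullet> y\<bar> + \<kappa> * norm y"
      using norm_triangle_sub[of "B' *v y" "(v' \<bullet> y) *\<^sub>R u'"]
        near_rank_one_remainder[OF B' \<open>0 \<le> \<kappa>\<close>, of y] unit
      by simp
    moreover have "\<kappa> * norm y \<le> \<kappa> * norm x" using ny \<open>0 \<le> \<kappa>\<close> by (rule mult_left_mono)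
    ultimately show "norm ((B' ** B) *v x) \<le> (\<bar>v' \<bullet> u\<bar> + 2 * \<kappa>) * norm x"
      unfolding y_def by (simp add: matrix_vector_mul_assoc[symmetric] algebra_simps)
  qed
qed

lemma norm_le_inner_add_norm_diff:
  fixes u p :: "'a::real_inner"
  assumes "norm u = 1"
  shows "norm p \<le> \<bar>u \<bullet> p\<bar> + norm (p - (u \<bullet> p) *\<^sub>R u)"
  using norm_triangle_ineq[of "(u \<bullet> p) *\<^sub>R u" "p - (u \<bullet> p) *\<^sub>R u"] assms by simp

lemma near_rank_one_step:
  assumes B: "near_rank_one B u' v' \<kappa>" and "0 \<le> \<kappa>" and u: "norm u = 1"
  shows "\<bar>\<bar>u' \<bullet> (B *v p)\<bar> - \<bar>v' \<bullet> u\<bar> * \<bar>u \<bullet> p\<bar>\<bar> \<le> norm (p - (u \<bullet> p) *\<^sub>R u)"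
    and "norm (B *v p - (u' \<bullet> (B *v p)) *\<^sub>R u') \<le> \<kappa> * (\<bar>u \<bullet> p\<bar> + norm (p - (u \<bullet> p) *\<^sub>R u))"
proof -
  have "norm v' = 1" using B unfolding near_rank_one_def by simp
  have "u' \<bullet> (B *v p) = (v' \<bullet> u) * (u \<bullet> p) + v' \<bullet> (p - (u \<bullet> p) *\<^sub>R u)"
    unfolding near_rank_one_inner[OF B] by (simp add: inner_diff_right)
  then have "\<bar>u' \<bullet> (B *v p) - (v' \<bullet> u) * (u \<bullet> p)\<bar> \<le> norm (p - (u \<bullet> p) *\<^sub>R u)"
    using Cauchy_Schwarz_ineq2[of v' "p - (u \<bullet> p) *\<^sub>R u"] \<open>norm v' = 1\<close> by simp
  then show "\<bar>\<bar>u' \<bullet> (B *v p)\<bar> - \<bar>v' \<bullet> u\<bar> * \<bar>u \<bullet> p\<bar>\<bar> \<le> norm (p - (u \<bullet> p) *\<^sub>R u)"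
    unfolding abs_mult[symmetric] using abs_triangle_ineq3 order_trans by blast
  show "norm (B *v p - (u' \<bullet> (B *v p)) *\<^sub>R u') \<le> \<kappa> * (\<bar>u \<bullet> p\<bar> + norm (p - (u \<bullet> p) *\<^sub>R u))"
    using near_rank_one_remainder[OF B \<open>0 \<le> \<kappa>\<close>, of p] \<open>0 \<le> \<kappa>\<close> norm_le_inner_add_norm_diff[OF u, of p]
    unfolding near_rank_one_inner[OF B] by (meson mult_left_mono order_trans)
qed

text \<open>In the applications \<open>c k\<close> is the coordinate of \<open>B\<^sub>k \<cdots> B\<^sub>1 y\<close> along \<open>u\<^sub>k\<close> and \<open>w k\<close> the norm of
  its component orthogonal to \<open>u\<^sub>k\<close>.\<close>
lemma coupled_growth_upper:
  fixes a c w :: "nat \<Rightarrow> real"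
  assumes rec: "\<And>k. k \<in> {1..<n} \<Longrightarrow> c (Suc k) \<le> a k * c k + w k \<and> w (Suc k) \<le> \<kappa> * (c k + w k)"
    and coeff: "\<And>k. k \<in> {1..<n} \<Longrightarrow> 0 \<le> a k \<and> \<kappa> * (1 + q) \<le> q * (a k + q)"
    and "0 \<le> \<kappa>" "0 \<le> q" "0 \<le> M" "c 1 \<le> M" "w 1 \<le> q * M"
    and "1 \<le> m" "m \<le> n"
  shows "c m \<le> (\<Prod>i\<in>{1..<m}. a i + q) * M \<and> w m \<le> q * ((\<Prod>i\<in>{1..<m}. a i + q) * M)"
  using \<open>1 \<le> m\<close> \<open>m \<le> n\<close>
proof (induction m rule: dec_induct)
  case base
  then show ?case using assms(6,7) by simp
next
  case (step k)
  define P where "P = (\<Prod>i\<in>{1..<k}. a i + q) * M"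
  have k: "k \<in> {1..<n}" using step.hyps step.prems by simp
  have IH: "c k \<le> P" "w k \<le> q * P" using step.IH step.prems unfolding P_def by auto
  have "0 \<le> P"
    unfolding P_def using coeff step.prems \<open>0 \<le> q\<close> \<open>0 \<le> M\<close>
    by (intro mult_nonneg_nonneg prod_nonneg) (auto intro: add_nonneg_nonneg)
  have "c (Suc k) \<le> a k * c k + w k" using rec[OF k] by simp
  also have "\<dots> \<le> a k * P + q * P" using IH coeff[OF k] by (intro add_mono mult_left_mono) auto
  finally have c: "c (Suc k) \<le> (a k + q) * P" by (simp add: algebra_simps)
  have "w (Suc k) \<le> \<kappa> * (c k + w k)" using rec[OF k] by simp
  also have "\<dots> \<le> \<kappa> * (P + q * P)" using IH \<open>0 \<le> \<kappa>\<close> by (intro mult_left_mono add_mono) auto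
  also have "\<dots> = (\<kappa> * (1 + q)) * P" by (simp add: algebra_simps)
  also have "\<dots> \<le> (q * (a k + q)) * P" using coeff[OF k] \<open>0 \<le> P\<close> by (intro mult_right_mono) auto
  finally have w: "w (Suc k) \<le> q * ((a k + q) * P)" by (simp add: mult.assoc)
  have "(\<Prod>i\<in>{1..<Suc k}. a i + q) * M = (a k + q) * P"
    unfolding P_def using step.hyps by (simp add: prod.atLeastLessThan_Suc)
  then show ?case using c w by simp
qed

lemma coupled_growth_lower:
  fixes a c w :: "nat \<Rightarrow> real"
  assumes rec: "\<And>k. k \<in> {1..<n} \<Longrightarrow> a k * c k - w k \<le> c (Suc k) \<and> w (Suc k) \<le> \<kappa> * (c k + w k)"
    and coeff: "\<And>k. k \<in> {1..<n} \<Longrightarrow> q \<le> a k \<and> \<kappa> * (1 + q) \<le> q * (a k - q)"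
    and "0 \<le> \<kappa>" "0 \<le> q" "0 \<le> c 1" "w 1 \<le> q * c 1"
    and "1 \<le> m" "m \<le> n"
  shows "(\<Prod>i\<in>{1..<m}. a i - q) * c 1 \<le> c m \<and> w m \<le> q * c m"
  using \<open>1 \<le> m\<close> \<open>m \<le> n\<close>
proof (induction m rule: dec_induct)
  case base
  then show ?case using assms(6) by simp
next
  case (step k)
  define P where "P = (\<Prod>i\<in>{1..<k}. a i - q) * c 1"
  have k: "k \<in> {1..<n}" using step.hyps step.prems by simp
  have IH: "P \<le> c k" "w k \<le> q * c k" using step.IH step.prems unfolding P_def by auto
  have "0 \<le> P"
    unfolding P_def using coeff step.prems \<open>0 \<le> c 1\<close>
    by (intro mult_nonneg_nonneg prod_nonneg) force+
  with IH have "0 \<le> c k" by simp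
  have "(a k - q) * c k \<le> a k * c k - w k" using IH by (simp add: algebra_simps)
  also have "\<dots> \<le> c (Suc k)" using rec[OF k] by simp
  finally have c: "(a k - q) * c k \<le> c (Suc k)" .
  have "w (Suc k) \<le> \<kappa> * (c k + w k)" using rec[OF k] by simp
  also have "\<dots> \<le> \<kappa> * (c k + q * c k)" using IH \<open>0 \<le> \<kappa>\<close> by (intro mult_left_mono add_mono) auto
  also have "\<dots> = (\<kappa> * (1 + q)) * c k" by (simp add: algebra_simps)
  also have "\<dots> \<le> (q * (a k - q)) * c k" using coeff[OF k] \<open>0 \<le> c k\<close> by (intro mult_right_mono) auto
  also have "\<dots> \<le> q * c (Suc k)" using c \<open>0 \<le> q\<close> by (simp add: mult.assoc mult_left_mono)
  finally have w: "w (Suc k) \<le> q * c (Suc k)" .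
  have "(\<Prod>i\<in>{1..<Suc k}. a i - q) * c 1 = (a k - q) * P"
    unfolding P_def using step.hyps by (simp add: prod.atLeastLessThan_Suc)
  also have "\<dots> \<le> (a k - q) * c k" using IH coeff[OF k] by (intro mult_left_mono) auto
  finally show ?case using c w by simp
qed

lemma near_rank_one_mprod_recursion:
  fixes B :: "nat \<Rightarrow> real^'d^'d" and u v :: "nat \<Rightarrow> real^'d" and y :: "real^'d"
  assumes nr1: "\<And>i. i \<in> {1..n} \<Longrightarrow> near_rank_one (B i) (u i) (v i) \<kappa>"
    and "0 \<le> \<kappa>" and k: "k \<in> {1..<n}"
  defines "c \<equiv> \<lambda>j. \<bar>u j \<bullet> (mprod B 1 j *v y)\<bar>"
    and "w \<equiv> \<lambda>j. norm (mprod B 1 j *v y - (u j \<bullet> (mprod B 1 j *v y)) *\<^sub>R u j)"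
  shows "c (Suc k) \<le> \<bar>v (Suc k) \<bullet> u k\<bar> * c k + w k"
    and "\<bar>v (Suc k) \<bullet> u k\<bar> * c k - w k \<le> c (Suc k)"
    and "w (Suc k) \<le> \<kappa> * (c k + w k)"
proof -
  have "mprod B 1 (Suc k) *v y = B (Suc k) *v (mprod B 1 k *v y)"
    unfolding mprod_one_Suc by (simp add: matrix_vector_mul_assoc)
  moreover have "norm (u k) = 1" using nr1[of k] k unfolding near_rank_one_def by auto
  moreover note near_rank_one_step[OF nr1[of "Suc k"] \<open>0 \<le> \<kappa>\<close> this, of "mprod B 1 k *v y"]
  ultimately show "c (Suc k) \<le> \<bar>v (Suc k) \<bullet> u k\<bar> * c k + w k"
    and "\<bar>v (Suc k) \<bullet> u k\<bar> * c k - w k \<le> c (Suc k)"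
    and "w (Suc k) \<le> \<kappa> * (c k + w k)"
    using k unfolding c_def w_def by (auto simp: abs_le_iff)
qed

lemma near_rank_one_mprod_opnorm_le:
  fixes B :: "nat \<Rightarrow> real^'d^'d" and u v :: "nat \<Rightarrow> real^'d"
  assumes nr1: "\<And>i. i \<in> {1..n} \<Longrightarrow> near_rank_one (B i) (u i) (v i) \<kappa>"
    and "1 \<le> n" "0 \<le> \<kappa>" "\<kappa> \<le> q"
    and coeff: "\<And>i. i \<in> {1..<n} \<Longrightarrow> \<kappa> * (1 + q) \<le> q * (\<bar>v (Suc i) \<bullet> u i\<bar> + q)"
  shows "opnorm (mprod B 1 n) \<le> (1 + q) * (\<Prod>i\<in>{1..<n}. \<bar>v (Suc i) \<bullet> u i\<bar> + q)"
proof (rule opnorm_le)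
  fix y
  define c where "c j = \<bar>u j \<bullet> (mprod B 1 j *v y)\<bar>" for j
  define w where "w j = norm (mprod B 1 j *v y - (u j \<bullet> (mprod B 1 j *v y)) *\<^sub>R u j)" for j
  have rec: "c (Suc k) \<le> \<bar>v (Suc k) \<bullet> u k\<bar> * c k + w k \<and> w (Suc k) \<le> \<kappa> * (c k + w k)"
    if "k \<in> {1..<n}" for k
    using near_rank_one_mprod_recursion[where B = B and u = u and v = v and y = y and n = n,
        OF nr1 \<open>0 \<le> \<kappa>\<close> that]
    unfolding c_def w_def by simp
  have B1: "near_rank_one (B 1) (u 1) (v 1) \<kappa>" using nr1 \<open>1 \<le> n\<close> by simp
  have "mprod B 1 1 = B 1" by simp
  then have c1: "c 1 = \<bar>v 1 \<bullet> y\<bar>" and w1: "w 1 = norm (B 1 *v y - (v 1 \<bullet> y) *\<^sub>R u 1)"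
    unfolding c_def w_def by (simp_all only: near_rank_one_inner[OF B1])
  have "c 1 \<le> norm y"
    using c1 Cauchy_Schwarz_ineq2[of "v 1" y] B1 unfolding near_rank_one_def by simp
  moreover have "w 1 \<le> q * norm y"
    using w1 near_rank_one_remainder[OF B1 \<open>0 \<le> \<kappa>\<close>, of y]
      mult_right_mono[OF \<open>\<kappa> \<le> q\<close> norm_ge_zero[of y]] by linarith
  ultimately have "c n \<le> (\<Prod>i\<in>{1..<n}. \<bar>v (Suc i) \<bullet> u i\<bar> + q) * norm y
      \<and> w n \<le> q * ((\<Prod>i\<in>{1..<n}. \<bar>v (Suc i) \<bullet> u i\<bar> + q) * norm y)"
    using rec coeff \<open>0 \<le> \<kappa>\<close> \<open>\<kappa> \<le> q\<close> \<open>1 \<le> n\<close>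
    by (intro coupled_growth_upper[where c = c and w = w and n = n]) auto
  moreover have "norm (u n) = 1" using nr1[of n] \<open>1 \<le> n\<close> unfolding near_rank_one_def by simp
  ultimately show "norm (mprod B 1 n *v y) \<le> (1 + q) * (\<Prod>i\<in>{1..<n}. \<bar>v (Suc i) \<bullet> u i\<bar> + q) * norm y"
    using norm_le_inner_add_norm_diff[of "u n" "mprod B 1 n *v y"]
    unfolding c_def w_def by (simp add: algebra_simps)
qed

lemma near_rank_one_mprod_opnorm_ge:
  fixes B :: "nat \<Rightarrow> real^'d^'d" and u v :: "nat \<Rightarrow> real^'d"
  assumes nr1: "\<And>i. i \<in> {1..n} \<Longrightarrow> near_rank_one (B i) (u i) (v i) \<kappa>"
    and "1 \<le> n" "0 \<le> \<kappa>" "0 \<le> q"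
    and coeff: "\<And>i. i \<in> {1..<n} \<Longrightarrow>
      q \<le> \<bar>v (Suc i) \<bullet> u i\<bar> \<and> \<kappa> * (1 + q) \<le> q * (\<bar>v (Suc i) \<bullet> u i\<bar> - q)"
  shows "(\<Prod>i\<in>{1..<n}. \<bar>v (Suc i) \<bullet> u i\<bar> - q) \<le> opnorm (mprod B 1 n)"
proof -
  define c where "c j = \<bar>u j \<bullet> (mprod B 1 j *v v 1)\<bar>" for j
  define w where "w j = norm (mprod B 1 j *v v 1 - (u j \<bullet> (mprod B 1 j *v v 1)) *\<^sub>R u j)" for j
  have rec: "\<bar>v (Suc k) \<bullet> u k\<bar> * c k - w k \<le> c (Suc k) \<and> w (Suc k) \<le> \<kappa> * (c k + w k)"
    if "k \<in> {1..<n}" for k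
    using near_rank_one_mprod_recursion[where B = B and u = u and v = v and y = "v 1" and n = n,
        OF nr1 \<open>0 \<le> \<kappa>\<close> that]
    unfolding c_def w_def by simp
  have unit: "norm (u k) = 1" "norm (v k) = 1" "B k *v v k = u k" if "k \<in> {1..n}" for k
    using nr1[OF that] unfolding near_rank_one_def by auto
  then have "c 1 = 1" "w 1 = 0"
    using \<open>1 \<le> n\<close> unfolding c_def w_def by (simp_all add: norm_eq_1)
  then have "(\<Prod>i\<in>{1..<n}. \<bar>v (Suc i) \<bullet> u i\<bar> - q) * c 1 \<le> c n"
    using rec coeff \<open>0 \<le> \<kappa>\<close> \<open>0 \<le> q\<close> \<open>1 \<le> n\<close>
    by (intro conjunct1[OF coupled_growth_lower[where c = c and w = w and n = n]]) auto
  also have "c n \<le> norm (mprod B 1 n *v v 1)"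
    unfolding c_def using Cauchy_Schwarz_ineq2[of "u n"] unit(1)[of n] \<open>1 \<le> n\<close> by simp
  also have "\<dots> \<le> opnorm (mprod B 1 n)"
    using norm_le_opnorm[of "mprod B 1 n" "v 1"] unit(2)[of 1] \<open>1 \<le> n\<close> by simp
  finally show ?thesis using \<open>c 1 = 1\<close> by simp
qed

section \<open>Scalar estimates\<close>

lemma growth_slack_conditions:
  fixes \<kappa> \<epsilon> a :: real
  assumes "0 < \<kappa>" "0 < \<epsilon>" "\<epsilon> \<le> 1/5" "\<kappa> \<le> \<epsilon>\<^sup>2 / 6" "9/10 * \<epsilon> \<le> a"
  shows "3 * \<kappa> / \<epsilon> \<le> a"
    "\<kappa> * (1 + 3 * \<kappa> / \<epsilon>) \<le> 3 * \<kappa> / \<epsilon> * (a - 3 * \<kappa> / \<epsilon>)"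
proof -
  define q where "q = 3 * \<kappa> / \<epsilon>"
  have "\<kappa> \<le> \<epsilon> * (\<epsilon> / 6)" using assms(4) by (simp add: power2_eq_square)
  then have q_le: "q \<le> \<epsilon> / 2" unfolding q_def using assms(2) by (simp add: field_simps)
  have "0 \<le> q" unfolding q_def using assms(1,2) by simp
  show "3 * \<kappa> / \<epsilon> \<le> a" using q_le assms(2,5) unfolding q_def by simp
  have "q * (4/10 * \<epsilon>) \<le> q * (a - q)"
    using q_le assms(5) \<open>0 \<le> q\<close> by (intro mult_left_mono) auto
  moreover have "q * (4/10 * \<epsilon>) = 12/10 * \<kappa>" unfolding q_def using assms(2) by simp
  moreover have "\<kappa> * (1 + q) \<le> \<kappa> * (11/10)" using q_le assms(1,3) by simp
  ultimately show "\<kappa> * (1 + 3 * \<kappa> / \<epsilon>) \<le> 3 * \<kappa> / \<epsilon> * (a - 3 * \<kappa> / \<epsilon>)"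
    using assms(1) unfolding q_def by linarith
qed

lemma exp_neg_three_le_one_minus:
  fixes x :: real
  assumes "0 \<le> x" "x \<le> 2/3"
  shows "exp (- 3 * x) \<le> 1 - x"
proof -
  have "0 \<le> x * (2 - 3 * x)" using assms by simp
  moreover have "(1 - x) * (1 + 3 * x) = 1 + x * (2 - 3 * x)" by (simp add: algebra_simps)
  ultimately have "1 \<le> (1 - x) * (1 + 3 * x)" by linarith
  also have "\<dots> \<le> (1 - x) * exp (3 * x)"
    using exp_ge_add_one_self[of "3 * x"] assms by (intro mult_left_mono) auto
  finally show ?thesis by (simp add: exp_minus field_simps)
qed

lemma ratio_factor_lower:
  fixes \<kappa> \<epsilon> a \<rho> :: real
  assumes "0 < \<kappa>" "0 < \<epsilon>" "\<epsilon> \<le> 1/5" "\<kappa> \<le> \<epsilon>\<^sup>2 / 6" "\<epsilon> \<le> \<rho>" "\<rho> \<le> a + 2 * \<kappa>"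
  shows "exp (- 11 * \<kappa> / \<epsilon>\<^sup>2) \<le> (a - 3 * \<kappa> / \<epsilon>) / \<rho>"
proof -
  define D where "D = \<kappa> / \<epsilon>\<^sup>2"
  define x where "x = (2 * \<kappa> + 3 * \<kappa> / \<epsilon>) / \<epsilon>"
  have "0 \<le> D" "D \<le> 1/6" unfolding D_def using assms(1,2,4) by (simp_all add: divide_le_eq)
  have x: "x = 2 * \<epsilon> * D + 3 * D"
    unfolding x_def D_def using assms(2) by (simp add: power2_eq_square field_simps)
  moreover have "\<epsilon> * D \<le> 1/5 * D" using assms(3) \<open>0 \<le> D\<close> by (rule mult_right_mono)
  ultimately have "x \<le> 34/10 * D" by linarith
  then have "exp (- 11 * D) \<le> exp (- 3 * x)" using \<open>0 \<le> D\<close> by simp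
  also have "\<dots> \<le> 1 - x"
  proof (rule exp_neg_three_le_one_minus)
    show "0 \<le> x" unfolding x_def using assms(1,2) by simp
    show "x \<le> 2/3" using \<open>x \<le> 34/10 * D\<close> \<open>D \<le> 1/6\<close> by linarith
  qed
  also have "\<dots> \<le> 1 - (2 * \<kappa> + 3 * \<kappa> / \<epsilon>) / \<rho>"
    unfolding x_def using assms by (intro diff_left_mono divide_left_mono) auto
  also have "\<dots> = (\<rho> - 2 * \<kappa> - 3 * \<kappa> / \<epsilon>) / \<rho>"
    using assms(2,5) by (simp add: diff_divide_distrib add_divide_distrib)
  also have "\<dots> \<le> (a - 3 * \<kappa> / \<epsilon>) / \<rho>"
    using assms(2,5,6) by (intro divide_right_mono) auto
  finally show ?thesis unfolding D_def by simp
qed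

lemma ratio_factor_upper:
  fixes \<kappa> \<epsilon> a \<rho> :: real
  assumes "0 < \<kappa>" "0 < \<epsilon>" "\<epsilon> \<le> 1" "\<epsilon> \<le> \<rho>" "a - \<kappa> \<le> \<rho>"
  shows "(a + 3 * \<kappa> / \<epsilon>) / \<rho> \<le> exp (4 * \<kappa> / \<epsilon>\<^sup>2)"
proof -
  have "\<kappa> / \<epsilon> \<le> \<kappa> / \<epsilon>\<^sup>2" "3 * \<kappa> / \<epsilon> \<le> 3 * \<kappa> / \<epsilon>\<^sup>2"
    using assms(1-3) by (simp_all add: power2_eq_square divide_le_eq field_simps)
  have "(a + 3 * \<kappa> / \<epsilon>) / \<rho> \<le> (\<rho> + (\<kappa> + 3 * \<kappa> / \<epsilon>)) / \<rho>"
    using assms(2,4,5) by (intro divide_right_mono) auto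
  also have "\<dots> = 1 + (\<kappa> + 3 * \<kappa> / \<epsilon>) / \<rho>"
    using assms(2,4) by (simp add: add_divide_distrib)
  also have "\<dots> \<le> 1 + (\<kappa> + 3 * \<kappa> / \<epsilon>) / \<epsilon>"
    using assms by (intro add_left_mono divide_left_mono) auto
  also have "\<dots> \<le> 1 + 4 * \<kappa> / \<epsilon>\<^sup>2"
    using assms(2) \<open>\<kappa> / \<epsilon> \<le> \<kappa> / \<epsilon>\<^sup>2\<close> \<open>3 * \<kappa> / \<epsilon> \<le> 3 * \<kappa> / \<epsilon>\<^sup>2\<close>
    by (simp add: add_divide_distrib power2_eq_square)
  also have "\<dots> \<le> exp (4 * \<kappa> / \<epsilon>\<^sup>2)" by (rule exp_ge_add_one_self)
  finally show ?thesis .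
qed

lemma prod_ratio_ge:
  fixes \<kappa> \<epsilon> R :: real and a \<rho> :: "nat \<Rightarrow> real" and n :: nat
  assumes "0 < \<kappa>" "0 < \<epsilon>" "\<epsilon> \<le> 1/5" "\<kappa> \<le> \<epsilon>\<^sup>2 / 6" "1 \<le> n"
    and \<rho>: "\<And>i. i \<in> {1..<n} \<Longrightarrow> \<epsilon> \<le> \<rho> i \<and> \<rho> i \<le> a i + 2 * \<kappa>"
    and lower: "(\<Prod>i\<in>{1..<n}. a i - 3 * \<kappa> / \<epsilon>) \<le> R"
  shows "exp (- 11 * n * \<kappa> / \<epsilon>\<^sup>2) \<le> R / (\<Prod>i\<in>{1..<n}. \<rho> i)" (is "?lower \<le> _")
proof -
  define D where "D = \<kappa> / \<epsilon>\<^sup>2"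
  have "0 \<le> D" unfolding D_def using assms(1) by simp
  have "0 < (\<Prod>i\<in>{1..<n}. \<rho> i)" using \<rho> assms(2) by (intro prod_pos) force
  have "real (n - 1) = real n - 1" using \<open>1 \<le> n\<close> by simp
  have "?lower = exp (real n * (- 11 * D))" unfolding D_def by simp
  also have "\<dots> \<le> exp (real (n - 1) * (- 11 * D))"
    unfolding \<open>real (n - 1) = real n - 1\<close> using \<open>0 \<le> D\<close> by (simp add: algebra_simps)
  also have "\<dots> = exp (- 11 * D) ^ (n - 1)" by (rule exp_of_nat_mult)
  also have "\<dots> \<le> (\<Prod>i\<in>{1..<n}. (a i - 3 * \<kappa> / \<epsilon>) / \<rho> i)"
    using prod_mono[of "{1..<n}" "\<lambda>_. exp (- 11 * D)"] ratio_factor_lower[OF assms(1-4)] \<rho>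
    unfolding D_def by fastforce
  also have "\<dots> \<le> R / (\<Prod>i\<in>{1..<n}. \<rho> i)"
    unfolding prod_dividef using lower \<open>0 < (\<Prod>i\<in>{1..<n}. \<rho> i)\<close>
    by (intro divide_right_mono) auto
  finally show ?thesis .
qed

lemma prod_ratio_le:
  fixes \<kappa> \<epsilon> R :: real and a \<rho> :: "nat \<Rightarrow> real" and n :: nat
  assumes "0 < \<kappa>" "0 < \<epsilon>" "\<epsilon> \<le> 1" "1 \<le> n"
    and \<rho>: "\<And>i. i \<in> {1..<n} \<Longrightarrow> 0 \<le> a i \<and> \<epsilon> \<le> \<rho> i \<and> a i - \<kappa> \<le> \<rho> i"
    and upper: "R \<le> (1 + 3 * \<kappa> / \<epsilon>) * (\<Prod>i\<in>{1..<n}. a i + 3 * \<kappa> / \<epsilon>)"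
  shows "R / (\<Prod>i\<in>{1..<n}. \<rho> i) \<le> exp (11 * n * \<kappa> / \<epsilon>\<^sup>2)" (is "_ \<le> ?upper")
proof -
  define D where "D = \<kappa> / \<epsilon>\<^sup>2"
  have "0 \<le> D" unfolding D_def using assms(1) by simp
  have "0 < (\<Prod>i\<in>{1..<n}. \<rho> i)" using \<rho> assms(2) by (intro prod_pos) force
  have factor: "0 \<le> (a i + 3 * \<kappa> / \<epsilon>) / \<rho> i \<and> (a i + 3 * \<kappa> / \<epsilon>) / \<rho> i \<le> exp (4 * D)"
    if "i \<in> {1..<n}" for i
    using ratio_factor_upper[OF assms(1-3), of "\<rho> i" "a i"] \<rho>[OF that] assms(1,2)
    unfolding D_def by simp
  have "1 + 3 * \<kappa> / \<epsilon> \<le> 1 + 3 * D"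
    unfolding D_def using assms(1-3) by (simp add: power2_eq_square divide_le_eq field_simps)
  also have "\<dots> \<le> exp (3 * D)" by (rule exp_ge_add_one_self)
  finally have "1 + 3 * \<kappa> / \<epsilon> \<le> exp (3 * D)" .
  have "R / (\<Prod>i\<in>{1..<n}. \<rho> i) \<le> (1 + 3 * \<kappa> / \<epsilon>) * (\<Prod>i\<in>{1..<n}. (a i + 3 * \<kappa> / \<epsilon>) / \<rho> i)"
    using upper \<open>0 < (\<Prod>i\<in>{1..<n}. \<rho> i)\<close> by (simp add: prod_dividef divide_right_mono)
  also have "\<dots> \<le> exp (3 * D) * exp (4 * D) ^ (n - 1)"
    using factor \<open>1 + 3 * \<kappa> / \<epsilon> \<le> exp (3 * D)\<close> \<open>0 \<le> D\<close>
    by (intro mult_mono prod_nonneg prod_le_power) auto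
  also have "\<dots> = exp (3 * D + real (n - 1) * (4 * D))" by (simp add: exp_add exp_of_nat_mult)
  also have "\<dots> \<le> exp (real n * (11 * D))"
    using \<open>1 \<le> n\<close> mult_nonneg_nonneg[OF of_nat_0_le_iff[of n] \<open>0 \<le> D\<close>] \<open>0 \<le> D\<close>
    by (simp add: of_nat_diff algebra_simps)
  also have "\<dots> = ?upper" unfolding D_def by simp
  finally show ?thesis .
qed

lemma near_rank_one_chain_ratio:
  fixes B :: "nat \<Rightarrow> real^'d^'d" and u v :: "nat \<Rightarrow> real^'d" and n :: nat and \<kappa> \<epsilon> :: real
  assumes nr1: "\<And>i. i \<in> {1..n} \<Longrightarrow> near_rank_one (B i) (u i) (v i) \<kappa>"
    and "1 \<le> n" "0 < \<kappa>" "0 < \<epsilon>" "\<epsilon> \<le> 1/5" "\<kappa> \<le> \<epsilon>\<^sup>2 / 6"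
    and pair: "\<And>i. i \<in> {1..<n} \<Longrightarrow> \<epsilon> \<le> opnorm (B (Suc i) ** B i)"
  shows "exp (- 11 * n * \<kappa> / \<epsilon>\<^sup>2)
      \<le> opnorm (mprod B 1 n) / (\<Prod>i\<in>{1..<n}. opnorm (B (Suc i) ** B i))
    \<and> opnorm (mprod B 1 n) / (\<Prod>i\<in>{1..<n}. opnorm (B (Suc i) ** B i))
      \<le> exp (11 * n * \<kappa> / \<epsilon>\<^sup>2)"
proof -
  define a where "a i = \<bar>v (Suc i) \<bullet> u i\<bar>" for i
  define q where "q = 3 * \<kappa> / \<epsilon>"
  have "\<epsilon>\<^sup>2 \<le> \<epsilon> * (1/5)" using assms(4,5) by (simp add: power2_eq_square)
  then have "2 * \<kappa> \<le> \<epsilon> / 10" "\<kappa> \<le> 1" using assms(4-6) by linarith+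
  have pair_bounds: "\<epsilon> \<le> opnorm (B (Suc i) ** B i) \<and> a i - \<kappa> \<le> opnorm (B (Suc i) ** B i)
      \<and> opnorm (B (Suc i) ** B i) \<le> a i + 2 * \<kappa>" if "i \<in> {1..<n}" for i
    using near_rank_one_pair_opnorm[OF nr1 nr1, of i "Suc i"] pair[OF that] that assms(3) \<open>\<kappa> \<le> 1\<close>
    unfolding a_def by auto
  then have "9/10 * \<epsilon> \<le> a i" if "i \<in> {1..<n}" for i
    using that \<open>2 * \<kappa> \<le> \<epsilon> / 10\<close> by fastforce
  then have slack: "q \<le> a i \<and> \<kappa> * (1 + q) \<le> q * (a i - q)" if "i \<in> {1..<n}" for i
    using growth_slack_conditions[OF assms(3-6)] that unfolding q_def by blast
  have "0 \<le> q" "\<kappa> \<le> q" using assms(3-5) unfolding q_def by (simp_all add: le_divide_eq)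
  then have "\<kappa> * (1 + q) \<le> q * (a i + q)" if "i \<in> {1..<n}" for i
    using slack[OF that] mult_left_mono[of "a i - q" "a i + q" q] by linarith
  then have upper: "opnorm (mprod B 1 n) \<le> (1 + q) * (\<Prod>i\<in>{1..<n}. a i + q)"
    using near_rank_one_mprod_opnorm_le[of n B u v \<kappa> q] nr1 assms(2,3) \<open>\<kappa> \<le> q\<close>
    unfolding a_def by auto
  have lower: "(\<Prod>i\<in>{1..<n}. a i - q) \<le> opnorm (mprod B 1 n)"
    using near_rank_one_mprod_opnorm_ge[of n B u v \<kappa> q] nr1 slack assms(2,3) \<open>0 \<le> q\<close>
    unfolding a_def by auto
  have "exp (- 11 * n * \<kappa> / \<epsilon>\<^sup>2)
      \<le> opnorm (mprod B 1 n) / (\<Prod>i\<in>{1..<n}. opnorm (B (Suc i) ** B i))"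
    by (rule prod_ratio_ge[OF assms(3-6,2), where a = a])
      (use pair_bounds lower in \<open>simp_all add: q_def\<close>)
  moreover have "opnorm (mprod B 1 n) / (\<Prod>i\<in>{1..<n}. opnorm (B (Suc i) ** B i))
      \<le> exp (11 * n * \<kappa> / \<epsilon>\<^sup>2)"
    by (rule prod_ratio_le[OF assms(3,4) _ assms(2), where a = a])
      (use pair_bounds upper assms(5) in \<open>simp_all add: q_def a_def\<close>)
  ultimately show ?thesis ..
qed

theorem theorem2p4:
  fixes L :: "nat \<Rightarrow> real^'d^'d" and n :: nat and \<epsilon> \<kappa> :: real
  assumes "CARD('d) \<ge> 2" and "n \<ge> 36"
    and "0 < \<epsilon>" and "\<epsilon> \<le> 1/5"
    and "0 < \<kappa>" and "\<kappa> \<le> \<epsilon>^2 / 6"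
    and "\<forall>i\<in>{1..n}. invertible (L i)"
    and "\<forall>i\<in>{1..n}. gap_ratio (L i) \<ge> 1 / \<kappa>"
    and "\<forall>i\<in>{1..n-1}. rho L i (i+1) \<ge> \<epsilon>"
  shows "exp (- 11 * n * \<kappa> / \<epsilon>^2) \<le> rho L 1 n / (\<Prod>i=1..n-1. rho L i (i+1))
       \<and> rho L 1 n / (\<Prod>i=1..n-1. rho L i (i+1)) \<le> exp (11 * n * \<kappa> / \<epsilon>^2)"
proof -
  define B where "B i = (1 / opnorm (L i)) *\<^sub>R L i" for i
  have "\<epsilon>\<^sup>2 \<le> 1" using assms(3,4) by (simp add: power_le_one)
  then have "\<kappa> \<le> 1" using assms(6) by simp
  have "\<forall>i\<in>{1..n}. \<exists>uv. near_rank_one (B i) (fst uv) (snd uv) \<kappa>"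
    using gap_ratio_near_rank_one[OF assms(1,5) \<open>\<kappa> \<le> 1\<close>] assms(8) unfolding B_def
    by (metis fst_conv snd_conv)
  then obtain uv where "\<And>i. i \<in> {1..n} \<Longrightarrow> near_rank_one (B i) (fst (uv i)) (snd (uv i)) \<kappa>"
    by metis
  moreover have "rho L i (Suc i) = opnorm (B (Suc i) ** B i)" for i
    unfolding rho_eq_opnorm_normalized B_def mprod_Suc_self ..
  moreover have "rho L 1 n = opnorm (mprod B 1 n)" unfolding rho_eq_opnorm_normalized B_def ..
  moreover have "{1..n-1} = {1..<n}" using assms(2) by auto
  ultimately show ?thesis
    using near_rank_one_chain_ratio[of n B "\<lambda>i. fst (uv i)" "\<lambda>i. snd (uv i)" \<kappa> \<epsilon>] assms(2-6,9)
    by simp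
qed

end
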